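(* Let $\mathcal{S}=(X,\xrightarrow{\Sigma},\le)$ be a very-WSTS and $I_0\in\mathrm{Idl}(X)$. (1) For all $y,z\in X$, $w\in\Sigma^*$ and states $c$ of $\mathcal{A}_{I_0}$: if $y\xrightarrow{w}z$ and $y\in\mathrm{ideal}(c)$, then there is a state $d$ of $\mathcal{A}_{I_0}$ such that $d$ can be reached from $c$ by reading $w$ in $\mathcal{A}_{I_0}$ and $z\in\mathrm{ideal}(d)$. (2) For all $z\in X$, $w\in\Sigma^*$ and states $c,d$ of $\mathcal{K}_{I_0}$: if $d$ can be reached from $c$ by reading $w$ in $\mathcal{K}_{I_0}$ and $z\in\mathrm{ideal}(d)$, then there exist $y\in\mathrm{ideal}(c)$, a word $w'$ with $w\preceq w'$, and $z'\ge z$ such that $y\xrightarrow{w'}z'$.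
   Context: A (labeled, ordered) transition system is $\mathcal{S}=(X,\xrightarrow{\Sigma},\le)$: $X$ a set, $\Sigma$ a finite alphabet, relations $\xrightarrow{a}\subseteq X\times X$ ($a\in\Sigma$), $\le$ a quasi-ordering. Relations extend to words ($x\xrightarrow{\varepsilon}x$; $x\xrightarrow{wa}y$ iff $x\xrightarrow{w}x'\xrightarrow{a}y$ for some $x'$). $\mathrm{Post}(x,w)=\{y:x\xrightarrow{w}y\}$, extended to sets by union; $\downarrow D=\{x:x\le y,\ y\in D\}$. $u\preceq v$ means $u$ is a (scattered) subword of $v$. WSTS: $\le$ is a wqo and $x\xrightarrow{a}y$, $x'\ge x$ imply $x'\xrightarrow{w}y'$ for some $w$, $y'\ge y$. Strong monotonicity: $x\xrightarrow{a}y$, $x'\ge x$ imply $x'\xrightarrow{a}y'$ with $y'\ge y$; strong-strict: additionally $x'>x$ gives such $y'>y$. Deterministic: $|\mathrm{Post}(x,a)|\le1$. Ideals: nonempty downward-closed directed subsets; $\mathrm{Idl}(X)$ their set. $\mathrm{IdealDecomp}(D)$: the finite set of maximal ideals in a downward-closed $D$ (for $X$ wqo). Completion $\widehat{\mathcal{S}}=(\mathrm{Idl}(X),\Rightarrow_\Sigma,\subseteq)$, $I\xRightarrow{a}J$ iff $J\in\mathrm{IdealDecomp}(\downarrow\mathrm{Post}(I,a))$, extended to words; if deterministic, $w(I)$ is the unique $J$ with $I\xRightarrow{w}J$ when defined. Acceleration candidate: strictly increasing sequence of ideals; $\mathrm{Idl}_0(X)=\mathrm{Idl}(X)$, $\mathrm{Idl}_n(X)$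 = unions of acceleration candidates in $\mathrm{Idl}_{n-1}(X)$; finitely many levels if some $\mathrm{Idl}_n(X)=\emptyset$. $w^\infty(I)=\bigcup_kw^k(I)$ if $I\subset w(I)$, else $I$ ($w\in\Sigma^+$). Very-WSTS: WSTS with strong monotonicity whose completion is a deterministic WSTS (with $\subseteq$ a wqo on $\mathrm{Idl}(X)$) with strong-strict monotonicity, and $\mathrm{Idl}(X)$ has finitely many levels. Ideal Karp-Miller algorithm on input $(\mathcal{S},I_0)$ (terminating for very-WSTS): builds a rooted tree with node labels $(\mathrm{ideal}(c),\mathrm{numaccel}(c))\in\mathrm{Idl}(X)\times\mathbb{N}$ and letter-labeled arcs, starting from root $r:(I_0,0)$. While some node $c:(I,n)$ is unmarked: if a proper ancestor $c'$ has $\mathrm{ideal}(c')=I$, mark $c$; otherwise, if a proper ancestor $c'$ has $\mathrm{ideal}(c')\subset I$ and $\mathrm{numaccel}(c')=n$, relabel $c$ by $(w^\infty(I),n+1)$ where $w$ is the arc-label word from $c'$ to $c$ ($c$ is accelerated because of $c'$); then, with $(I,n)$ the current label, add for each $a\in\Sigma$ with $a(I)$ defined a child $d:(a(I),n)$ via an $a$-arc; mark $c$. $\mathcal{T}_{I_0}$ is the returned tree. The stuttering automaton $\mathcal{A}_{I_0}$: states are the nodes of $\mathcal{T}_{I_0}$, all accepting, initial state the root, transitions the arcs of $\mathcal{T}_{I_0}$ plus an $\varepsilon$-transition from each leaf $c$ to any ancestor $c'$ with $\mathrm{ideal}(c)=\mathrm{ideal}(c')$. The Karp-Miller automaton $\mathcal{K}_{I_0}$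 additionally has an $\varepsilon$-transition from each accelerated node $c$ to the ancestor $c'$ because of which it was accelerated. "Reaching $d$ from $c$ by reading $w$" allows $\varepsilon$-transitions. *)

theory Defs
  imports Main "HOL-Library.Sublist"
begin

text \<open>A transition system is given by a type 'x of states (X = UNIV), a finite alphabet
  (the finite type 'a), a labelled step relation  step a x y  (x --a--> y) and a quasi-ordering le.\<close>

fun steps :: "('a \<Rightarrow> 'x \<Rightarrow> 'x \<Rightarrow> bool) \<Rightarrow> 'a list \<Rightarrow> 'x \<Rightarrow> 'x \<Rightarrow> bool" where
  "steps step [] x y = (x = y)"
| "steps step (a # w) x y = (\<exists>x'. step a x x' \<and> steps step w x' y)"

definition wqo_on :: "'b set \<Rightarrow> ('b \<Rightarrow> 'b \<Rightarrow> bool) \<Rightarrow> bool" where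
  "wqo_on A r \<longleftrightarrow> (\<forall>x\<in>A. r x x) \<and> (\<forall>x\<in>A. \<forall>y\<in>A. \<forall>z\<in>A. r x y \<longrightarrow> r y z \<longrightarrow> r x z)
     \<and> (\<forall>f::nat \<Rightarrow> 'b. (\<forall>i. f i \<in> A) \<longrightarrow> (\<exists>i j. i < j \<and> r (f i) (f j)))"

definition downclosure :: "('x \<Rightarrow> 'x \<Rightarrow> bool) \<Rightarrow> 'x set \<Rightarrow> 'x set" where
  "downclosure le D = {x. \<exists>y\<in>D. le x y}"

definition Post :: "('a \<Rightarrow> 'x \<Rightarrow> 'x \<Rightarrow> bool) \<Rightarrow> 'x set \<Rightarrow> 'a \<Rightarrow> 'x set" where
  "Post step I a = {y. \<exists>x\<in>I. step a x y}"

definition is_ideal :: "('x \<Rightarrow> 'x \<Rightarrow> bool) \<Rightarrow> 'x set \<Rightarrow> bool" where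
  "is_ideal le I \<longleftrightarrow> I \<noteq> {} \<and> (\<forall>x\<in>I. \<forall>y. le y x \<longrightarrow> y \<in> I)
     \<and> (\<forall>x\<in>I. \<forall>y\<in>I. \<exists>z\<in>I. le x z \<and> le y z)"

definition Idl :: "('x \<Rightarrow> 'x \<Rightarrow> bool) \<Rightarrow> 'x set set" where
  "Idl le = {I. is_ideal le I}"

definition IdealDecomp :: "('x \<Rightarrow> 'x \<Rightarrow> bool) \<Rightarrow> 'x set \<Rightarrow> 'x set set" where
  "IdealDecomp le D = {I. is_ideal le I \<and> I \<subseteq> D \<and>
       (\<forall>J. is_ideal le J \<and> J \<subseteq> D \<and> I \<subseteq> J \<longrightarrow> J = I)}"

definition cstep :: "('a \<Rightarrow> 'x \<Rightarrow> 'x \<Rightarrow> bool) \<Rightarrow> ('x \<Rightarrow> 'x \<Rightarrow> bool) \<Rightarrow> 'a \<Rightarrow> 'x set \<Rightarrow> 'x set \<Rightarrow> bool" where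
  "cstep step le a I J \<longleftrightarrow> J \<in> IdealDecomp le (downclosure le (Post step I a))"

definition succ :: "('a \<Rightarrow> 'x \<Rightarrow> 'x \<Rightarrow> bool) \<Rightarrow> ('x \<Rightarrow> 'x \<Rightarrow> bool) \<Rightarrow> 'a \<Rightarrow> 'x set \<Rightarrow> 'x set option" where
  "succ step le a I = (if \<exists>!J. cstep step le a I J then Some (THE J. cstep step le a I J) else None)"

fun wapp :: "('a \<Rightarrow> 'x \<Rightarrow> 'x \<Rightarrow> bool) \<Rightarrow> ('x \<Rightarrow> 'x \<Rightarrow> bool) \<Rightarrow> 'a list \<Rightarrow> 'x set \<Rightarrow> 'x set option" where
  "wapp step le [] I = Some I"
| "wapp step le (a # w) I = (case succ step le a I of None \<Rightarrow> None | Some J \<Rightarrow> wapp step le w J)"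

fun wpow :: "('a \<Rightarrow> 'x \<Rightarrow> 'x \<Rightarrow> bool) \<Rightarrow> ('x \<Rightarrow> 'x \<Rightarrow> bool) \<Rightarrow> 'a list \<Rightarrow> nat \<Rightarrow> 'x set \<Rightarrow> 'x set option" where
  "wpow step le w 0 I = Some I"
| "wpow step le w (Suc k) I = Option.bind (wpow step le w k I) (wapp step le w)"

definition winf :: "('a \<Rightarrow> 'x \<Rightarrow> 'x \<Rightarrow> bool) \<Rightarrow> ('x \<Rightarrow> 'x \<Rightarrow> bool) \<Rightarrow> 'a list \<Rightarrow> 'x set \<Rightarrow> 'x set" where
  "winf step le w I = (if \<exists>J. wapp step le w I = Some J \<and> I \<subset> J
       then \<Union>{J. \<exists>k. wpow step le w k I = Some J} else I)"

fun Idl_level :: "('x \<Rightarrow> 'x \<Rightarrow> bool) \<Rightarrow> nat \<Rightarrow> 'x set set" where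
  "Idl_level le 0 = Idl le"
| "Idl_level le (Suc n) = {\<Union>(range f) | f. (\<forall>i. f i \<in> Idl_level le n) \<and> (\<forall>i. f i \<subset> f (Suc i))}"

definition wsts :: "('a \<Rightarrow> 'x \<Rightarrow> 'x \<Rightarrow> bool) \<Rightarrow> ('x \<Rightarrow> 'x \<Rightarrow> bool) \<Rightarrow> bool" where
  "wsts step le \<longleftrightarrow> wqo_on UNIV le \<and>
     (\<forall>a x y x'. step a x y \<and> le x x' \<longrightarrow> (\<exists>w y'. steps step w x' y' \<and> le y y'))"

definition strongly_monotone :: "('a \<Rightarrow> 'x \<Rightarrow> 'x \<Rightarrow> bool) \<Rightarrow> ('x \<Rightarrow> 'x \<Rightarrow> bool) \<Rightarrow> bool" where
  "strongly_monotone step le \<longleftrightarrow>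
     (\<forall>a x y x'. step a x y \<and> le x x' \<longrightarrow> (\<exists>y'. step a x' y' \<and> le y y'))"

definition very_wsts :: "('a::finite \<Rightarrow> 'x \<Rightarrow> 'x \<Rightarrow> bool) \<Rightarrow> ('x \<Rightarrow> 'x \<Rightarrow> bool) \<Rightarrow> bool" where
  "very_wsts step le \<longleftrightarrow>
     wsts step le \<and> strongly_monotone step le \<and>
     \<comment> \<open>the completion is a WSTS: subseteq is a wqo on Idl(X), and monotone\<close>
     wqo_on (Idl le) (\<subseteq>) \<and>
     (\<forall>a I J I'. I \<in> Idl le \<and> I' \<in> Idl le \<and> cstep step le a I J \<and> I \<subseteq> I' \<longrightarrow>
         (\<exists>w J'. (\<exists>K. wapp step le w I' = Some K \<and> J' = K) \<and> J \<subseteq> J')) \<and>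
     \<comment> \<open>the completion is deterministic\<close>
     (\<forall>a I J J'. I \<in> Idl le \<and> cstep step le a I J \<and> cstep step le a I J' \<longrightarrow> J = J') \<and>
     \<comment> \<open>strong-strict monotonicity of the completion\<close>
     (\<forall>a I J I'. I \<in> Idl le \<and> I' \<in> Idl le \<and> cstep step le a I J \<and> I \<subseteq> I' \<longrightarrow>
         (\<exists>J'. cstep step le a I' J' \<and> J \<subseteq> J')) \<and>
     (\<forall>a I J I'. I \<in> Idl le \<and> I' \<in> Idl le \<and> cstep step le a I J \<and> I \<subset> I' \<longrightarrow>
         (\<exists>J'. cstep step le a I' J' \<and> J \<subset> J')) \<and>
     \<comment> \<open>finitely many levels\<close>
     (\<exists>n. Idl_level le n = {})"

text \<open>Nodes of the tree are identified with the word labelling the path from the root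
  (the completion is deterministic, so each node has at most one a-child).
  lab c = (ideal(c), numaccel(c)); acc c = Some c' iff c was accelerated because of c'.
  km_pre gives the label a node receives when it is created.\<close>

definition km_pre :: "('a \<Rightarrow> 'x \<Rightarrow> 'x \<Rightarrow> bool) \<Rightarrow> ('x \<Rightarrow> 'x \<Rightarrow> bool) \<Rightarrow> 'x set
     \<Rightarrow> ('a list \<Rightarrow> 'x set \<times> nat) \<Rightarrow> 'a list \<Rightarrow> 'x set \<times> nat" where
  "km_pre step le I0 lab c = (if c = [] then (I0, 0)
     else (the (succ step le (last c) (fst (lab (butlast c)))), snd (lab (butlast c))))"

text \<open>T, lab, acc is a possible output of the ideal Karp-Miller algorithm on (S, I0).\<close>
definition KM_tree :: "('a \<Rightarrow> 'x \<Rightarrow> 'x \<Rightarrow> bool) \<Rightarrow> ('x \<Rightarrow> 'x \<Rightarrow> bool) \<Rightarrow> 'x set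
     \<Rightarrow> 'a list set \<Rightarrow> ('a list \<Rightarrow> 'x set \<times> nat) \<Rightarrow> ('a list \<Rightarrow> 'a list option) \<Rightarrow> bool" where
  "KM_tree step le I0 T lab acc \<longleftrightarrow> finite T \<and> [] \<in> T \<and> (\<forall>c a. c @ [a] \<in> T \<longrightarrow> c \<in> T) \<and>
    (\<forall>c\<in>T. let P = km_pre step le I0 lab c in
      (if \<exists>c'. strict_prefix c' c \<and> fst (lab c') = fst P
       then lab c = P \<and> acc c = None \<and> (\<forall>a. c @ [a] \<notin> T)
       else (if \<exists>c'. strict_prefix c' c \<and> fst (lab c') \<subset> fst P \<and> snd (lab c') = snd P
             then (\<exists>c'. strict_prefix c' c \<and> fst (lab c') \<subset> fst P \<and> snd (lab c') = snd P \<and>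
                     acc c = Some c' \<and>
                     lab c = (winf step le (drop (length c') c) (fst P), Suc (snd P)))
             else lab c = P \<and> acc c = None)
         \<and> (\<forall>a. c @ [a] \<in> T \<longleftrightarrow> succ step le a (fst (lab c)) \<noteq> None)))"

text \<open>Reading a word in an automaton whose states are the nodes of T, with tree arcs
  and an epsilon relation eps.\<close>
inductive reach :: "'a list set \<Rightarrow> ('a list \<Rightarrow> 'a list \<Rightarrow> bool) \<Rightarrow> 'a list \<Rightarrow> 'a list \<Rightarrow> 'a list \<Rightarrow> bool"
  for T eps where
  refl: "c \<in> T \<Longrightarrow> reach T eps c [] c"
| arc: "reach T eps c w d \<Longrightarrow> d @ [a] \<in> T \<Longrightarrow> reach T eps c (w @ [a]) (d @ [a])"
| eps: "reach T eps c w d \<Longrightarrow> eps d d' \<Longrightarrow> reach T eps c w d'"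

text \<open>epsilon-transitions of the stuttering automaton A_I0: from each leaf to any ancestor
  with the same ideal.\<close>
definition epsA :: "'a list set \<Rightarrow> ('a list \<Rightarrow> 'x set \<times> nat) \<Rightarrow> 'a list \<Rightarrow> 'a list \<Rightarrow> bool" where
  "epsA T lab d d' \<longleftrightarrow> d \<in> T \<and> (\<forall>a. d @ [a] \<notin> T) \<and> strict_prefix d' d \<and> fst (lab d') = fst (lab d)"

definition epsK :: "'a list set \<Rightarrow> ('a list \<Rightarrow> 'x set \<times> nat) \<Rightarrow> ('a list \<Rightarrow> 'a list option)
     \<Rightarrow> 'a list \<Rightarrow> 'a list \<Rightarrow> bool" where
  "epsK T lab acc d d' \<longleftrightarrow> epsA T lab d d' \<or> (d \<in> T \<and> acc d = Some d')"

end

theory Submission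
  imports Defs
begin

(* Every node label contains the completion successor of its parent's label, since an
   acceleration only enlarges it. For (1), let y be in the ideal I of a node that is not a repeated
   leaf and let y step to y' by a. Then y' lies in a maximal ideal of the downward closure of
   Post(I, a) (Zorn), which by determinism of the completion is a(I); so the a-child exists and its
   label contains y'. A repeated leaf is first sent by an epsilon-move to its ancestor with the same
   ideal, which is not a leaf.
   For (2), every element of a(I) is dominated by an a-successor of an element of I, and every
   element of w^inf(I) by a state reachable from I; the epsilon-moves of the Karp-Miller automaton
   only lead to smaller ideals. Strong monotonicity concatenates these coverings along a run, the
   word growing only at accelerations. *)

lemma very_wsts_wqo: "very_wsts step le \<Longrightarrow> wqo_on UNIV le"
  by (simp add: very_wsts_def wsts_def)

lemma very_wsts_reflp: "very_wsts step le \<Longrightarrow> reflp le"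
  using very_wsts_wqo unfolding wqo_on_def reflp_def by blast

lemma very_wsts_transp: "very_wsts step le \<Longrightarrow> transp le"
  using very_wsts_wqo unfolding wqo_on_def transp_def by blast

lemma very_wsts_strongly_monotone: "very_wsts step le \<Longrightarrow> strongly_monotone step le"
  by (simp add: very_wsts_def)

lemma very_wsts_cstep_unique:
  "very_wsts step le \<Longrightarrow> is_ideal le I \<Longrightarrow> cstep step le a I J \<Longrightarrow> cstep step le a I J' \<Longrightarrow> J = J'"
  by (simp add: very_wsts_def Idl_def)

lemma very_wsts_cstep_mono:
  "very_wsts step le \<Longrightarrow> is_ideal le I \<Longrightarrow> is_ideal le I' \<Longrightarrow> cstep step le a I J \<Longrightarrow> I \<subseteq> I'
    \<Longrightarrow> \<exists>J'. cstep step le a I' J' \<and> J \<subseteq> J'"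
  by (simp add: very_wsts_def Idl_def)

lemma steps_append: "steps step (u @ v) x z \<longleftrightarrow> (\<exists>y. steps step u x y \<and> steps step v y z)"
  by (induction u arbitrary: x) auto

lemma steps_strongly_monotone:
  assumes "strongly_monotone step le" "steps step w x y" "le x x'"
  shows "\<exists>y'. steps step w x' y' \<and> le y y'"
  using assms(2,3)
proof (induction w arbitrary: x x')
  case (Cons a w)
  then obtain x1 where "step a x x1" "steps step w x1 y" by auto
  moreover obtain x1' where "step a x' x1'" "le x1 x1'"
    using assms(1) Cons.prems(2) \<open>step a x x1\<close> unfolding strongly_monotone_def by blast
  ultimately show ?case using Cons.IH by fastforce
qed simp

definition coverable :: "('a \<Rightarrow> 'x \<Rightarrow> 'x \<Rightarrow> bool) \<Rightarrow> ('x \<Rightarrow> 'x \<Rightarrow> bool) \<Rightarrow> 'x set \<Rightarrow> 'a list \<Rightarrow> 'x \<Rightarrow> bool"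
  where "coverable step le I w z \<longleftrightarrow>
    (\<exists>y\<in>I. \<exists>w' z'. subseq w w' \<and> le z z' \<and> steps step w' y z')"

lemma coverable_Nil_if_mem:
  assumes "reflp le" "z \<in> I"
  shows "coverable step le I [] z"
proof -
  have "subseq [] []" "le z z" "steps step [] z z"
    using reflpD[OF assms(1)] by simp_all
  then show ?thesis
    using assms(2) unfolding coverable_def by blast
qed

lemma coverable_subseq: "subseq u v \<Longrightarrow> coverable step le I v z \<Longrightarrow> coverable step le I u z"
  unfolding coverable_def using subseq_order.order_trans by blast

lemma coverable_append:
  assumes sm: "strongly_monotone step le" and tr: "transp le"
    and J: "\<And>x. x \<in> J \<Longrightarrow> coverable step le I u x" and z: "coverable step le J v z"
  shows "coverable step le I (u @ v) z"
proof -
  obtain x v' z1 where x: "x \<in> J" and v': "subseq v v'" "le z z1" "steps step v' x z1"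
    using z unfolding coverable_def by blast
  obtain y u' x1 where u': "y \<in> I" "subseq u u'" "le x x1" "steps step u' y x1"
    using J[OF x] unfolding coverable_def by blast
  obtain z2 where z2: "steps step v' x1 z2" "le z1 z2"
    using steps_strongly_monotone[OF sm v'(3) u'(3)] by blast
  have "subseq (u @ v) (u' @ v')"
    using u'(2) v'(1) by (rule list_emb_append_mono)
  moreover have "le z z2"
    using tr v'(2) z2(2) by (rule transpD)
  moreover have "steps step (u' @ v') y z2"
    using u'(4) z2(1) steps_append by fast
  ultimately show ?thesis
    using u'(1) unfolding coverable_def by blast
qed

lemma cstep_if_succ_eq_Some: "succ step le a I = Some J \<Longrightarrow> cstep step le a I J"
  unfolding succ_def by (auto split: if_splits intro: theI')

lemma succ_eq_Some_if_cstep: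
  assumes "very_wsts step le" "is_ideal le I" "cstep step le a I J"
  shows "succ step le a I = Some J"
proof -
  have "\<exists>!J. cstep step le a I J"
    using assms very_wsts_cstep_unique by blast
  moreover from this have "(THE J. cstep step le a I J) = J"
    using assms(3) by (rule the1_equality)
  ultimately show ?thesis
    unfolding succ_def by simp
qed

lemma cstep_is_ideal: "cstep step le a I J \<Longrightarrow> is_ideal le J"
  unfolding cstep_def IdealDecomp_def by blast

lemma coverable_if_cstep: "cstep step le a I J \<Longrightarrow> z \<in> J \<Longrightarrow> coverable step le I [a] z"
  unfolding cstep_def IdealDecomp_def downclosure_def Post_def coverable_def by fastforce

context
  fixes step :: "'a \<Rightarrow> 'x \<Rightarrow> 'x \<Rightarrow> bool" and le :: "'x \<Rightarrow> 'x \<Rightarrow> bool"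
  assumes refl: "reflp le" and trans: "transp le" and mono: "strongly_monotone step le"
begin

lemma coverable_if_wapp:
  "wapp step le w I = Some J \<Longrightarrow> z \<in> J \<Longrightarrow> coverable step le I w z"
proof (induction w arbitrary: I)
  case Nil
  then show ?case using coverable_Nil_if_mem[OF refl] by simp
next
  case (Cons a w)
  then obtain K where K: "succ step le a I = Some K" "wapp step le w K = Some J"
    by (auto split: option.splits)
  have "coverable step le I ([a] @ w) z"
    using coverable_append[OF mono trans coverable_if_cstep[OF cstep_if_succ_eq_Some[OF K(1)]]
        Cons.IH[OF K(2) Cons.prems(2)]] .
  then show ?case by simp
qed

lemma coverable_if_wpow:
  "wpow step le w k I = Some J \<Longrightarrow> z \<in> J \<Longrightarrow> coverable step le I (concat (replicate k w)) z"
proof (induction k arbitrary: J z)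
  case 0
  then show ?case using coverable_Nil_if_mem[OF refl] by simp
next
  case (Suc k)
  then obtain K where K: "wpow step le w k I = Some K" "wapp step le w K = Some J"
    by (cases "wpow step le w k I") auto
  have "coverable step le I (concat (replicate k w) @ w) z"
    using coverable_append[OF mono trans Suc.IH[OF K(1)] coverable_if_wapp[OF K(2) Suc.prems(2)]] .
  then show ?case by (simp add: replicate_append_same[symmetric])
qed

lemma coverable_if_winf:
  assumes "z \<in> winf step le w I"
  shows "coverable step le I [] z"
proof (cases "\<exists>J. wapp step le w I = Some J \<and> I \<subset> J")
  case True
  then obtain k J where "wpow step le w k I = Some J" "z \<in> J"
    using assms unfolding winf_def by auto
  then show ?thesis
    using coverable_subseq[OF list_emb_Nil coverable_if_wpow] by blast
next
  case False
  then show ?thesis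
    using assms coverable_Nil_if_mem[OF refl] unfolding winf_def if_not_P[OF False] by blast
qed

end

lemma is_ideal_principal:
  assumes "reflp le" "transp le"
  shows "is_ideal le {x. le x y}"
  using reflpD[OF assms(1)] transpD[OF assms(2)] unfolding is_ideal_def by blast

lemma is_ideal_Union_chain:
  assumes ideals: "\<And>J. J \<in> C \<Longrightarrow> is_ideal le J" and "C \<noteq> {}" and chain: "chain\<^sub>\<subseteq> C"
  shows "is_ideal le (\<Union>C)"
  unfolding is_ideal_def
proof (intro conjI ballI allI impI)
  show "\<Union>C \<noteq> {}"
    using \<open>C \<noteq> {}\<close> ideals unfolding is_ideal_def by blast
  show "y \<in> \<Union>C" if "x \<in> \<Union>C" "le y x" for x y
    using that ideals unfolding is_ideal_def by blast
  show "\<exists>z\<in>\<Union>C. le x z \<and> le y z" if xy: "x \<in> \<Union>C" "y \<in> \<Union>C" for x y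
  proof -
    obtain A B where "A \<in> C" "B \<in> C" "x \<in> A" "y \<in> B"
      using xy by blast
    moreover have "A \<subseteq> B \<or> B \<subseteq> A"
      using chain \<open>A \<in> C\<close> \<open>B \<in> C\<close> unfolding chain_subset_def by blast
    ultimately show ?thesis
      using ideals unfolding is_ideal_def by blast
  qed
qed

lemma ex_IdealDecomp_mem:
  assumes refl: "reflp le" and trans: "transp le" and "y \<in> D"
  shows "\<exists>M\<in>IdealDecomp le (downclosure le D). y \<in> M"
proof -
  define A where "A = {J. is_ideal le J \<and> {x. le x y} \<subseteq> J \<and> J \<subseteq> downclosure le D}"
  have principal: "{x. le x y} \<in> A"
    using is_ideal_principal[OF refl trans] \<open>y \<in> D\<close> unfolding A_def downclosure_def by blast
  have "\<exists>U\<in>A. \<forall>X\<in>C. X \<subseteq> U" if C: "C \<in> chains A" for C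
  proof (cases "C = {}")
    case True
    then show ?thesis using principal by blast
  next
    case False
    have "C \<subseteq> A" "chain\<^sub>\<subseteq> C"
      using C unfolding chains_def by auto
    then have "is_ideal le (\<Union>C)"
      using is_ideal_Union_chain[OF _ False] unfolding A_def by blast
    moreover have "{x. le x y} \<subseteq> \<Union>C" "\<Union>C \<subseteq> downclosure le D"
      using \<open>C \<subseteq> A\<close> False unfolding A_def by auto
    ultimately have "\<Union>C \<in> A"
      unfolding A_def by blast
    then show ?thesis by blast
  qed
  then obtain M where M: "M \<in> A" "\<forall>X\<in>A. M \<subseteq> X \<longrightarrow> X = M"
    using Zorn_Lemma2[of A] by blast
  have "M \<in> IdealDecomp le (downclosure le D)"
    unfolding IdealDecomp_def
  proof (intro CollectI conjI allI impI)
    show "is_ideal le M" "M \<subseteq> downclosure le D"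
      using M(1) unfolding A_def by auto
    show "J = M" if "is_ideal le J \<and> J \<subseteq> downclosure le D \<and> M \<subseteq> J" for J
      using that M unfolding A_def by blast
  qed
  moreover have "y \<in> M"
    using M(1) reflpD[OF refl, of y] unfolding A_def by blast
  ultimately show ?thesis by blast
qed

lemma ex_cstep_mem:
  assumes "reflp le" "transp le" "y \<in> Post step I a"
  shows "\<exists>J. cstep step le a I J \<and> y \<in> J"
  using ex_IdealDecomp_mem[OF assms] unfolding cstep_def by (elim bexE) blast

lemma wapp_is_ideal: "wapp step le w I = Some J \<Longrightarrow> is_ideal le I \<Longrightarrow> is_ideal le J"
proof (induction w arbitrary: I)
  case (Cons a w)
  then show ?case
    using cstep_is_ideal cstep_if_succ_eq_Some by (fastforce split: option.splits)
qed simp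

lemma wapp_mono:
  assumes "very_wsts step le"
  shows "wapp step le w I = Some J \<Longrightarrow> is_ideal le I \<Longrightarrow> is_ideal le I' \<Longrightarrow> I \<subseteq> I'
    \<Longrightarrow> \<exists>J'. wapp step le w I' = Some J' \<and> J \<subseteq> J'"
proof (induction w arbitrary: I I')
  case (Cons a w)
  then obtain K where sK: "succ step le a I = Some K" and K2: "wapp step le w K = Some J"
    by (auto split: option.splits)
  have K: "cstep step le a I K"
    using sK by (rule cstep_if_succ_eq_Some)
  then obtain K' where K': "cstep step le a I' K'" "K \<subseteq> K'"
    using very_wsts_cstep_mono[OF assms _ _ K] Cons.prems by blast
  then have "succ step le a I' = Some K'"
    using succ_eq_Some_if_cstep[OF assms \<open>is_ideal le I'\<close>] by blast
  then show ?case
    using Cons.IH[OF K2 cstep_is_ideal[OF K] cstep_is_ideal[OF K'(1)] K'(2)] by simp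
qed simp

lemma subset_winf: "I \<subseteq> winf step le w I"
proof -
  have "I \<in> {J. \<exists>k. wpow step le w k I = Some J}"
    using wpow.simps(1) by blast
  then show ?thesis
    unfolding winf_def by auto
qed

lemma wpow_increasing:
  assumes V: "very_wsts step le" and I: "is_ideal le I"
    and J1: "wapp step le w I = Some J1" "I \<subseteq> J1"
  shows "\<exists>J J'. wpow step le w k I = Some J \<and> wapp step le w J = Some J' \<and> J \<subseteq> J' \<and> is_ideal le J"
proof (induction k)
  case 0
  then show ?case using I J1 by simp
next
  case (Suc k)
  then obtain J J' where J: "wpow step le w k I = Some J" "wapp step le w J = Some J'"
    "J \<subseteq> J'" "is_ideal le J"
    by blast
  have "is_ideal le J'"
    using wapp_is_ideal[OF J(2,4)] .
  moreover obtain J'' where "wapp step le w J' = Some J''" "J' \<subseteq> J''"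
    using wapp_mono[OF V J(2,4) \<open>is_ideal le J'\<close> J(3)] by blast
  ultimately show ?case
    using J(1,2) by auto
qed

lemma winf_is_ideal:
  assumes V: "very_wsts step le" and I: "is_ideal le I"
  shows "is_ideal le (winf step le w I)"
proof (cases "\<exists>J. wapp step le w I = Some J \<and> I \<subset> J")
  case True
  then obtain J1 where J1: "wapp step le w I = Some J1" "I \<subseteq> J1"
    by blast
  define f where "f k = the (wpow step le w k I)" for k
  have f: "wpow step le w k I = Some (f k)" "is_ideal le (f k)" "f k \<subseteq> f (Suc k)" for k
    using wpow_increasing[OF V I J1, of k] by (auto simp: f_def)
  have "{J. \<exists>k. wpow step le w k I = Some J} = range f"
    using f(1) by auto
  moreover have "is_ideal le (\<Union>(range f))"
  proof (rule is_ideal_Union_chain)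
    have "mono f"
      using f(3) by (simp add: mono_iff_le_Suc)
    then show "chain\<^sub>\<subseteq> (range f)"
      unfolding chain_subset_def using monoD nat_le_linear by blast
  qed (use f(2) in auto)
  ultimately show ?thesis
    using True unfolding winf_def by simp
next
  case False
  show ?thesis
    unfolding winf_def if_not_P[OF False] by (rule I)
qed

locale km_tree =
  fixes step :: "'a::finite \<Rightarrow> 'x \<Rightarrow> 'x \<Rightarrow> bool" and le :: "'x \<Rightarrow> 'x \<Rightarrow> bool" and I0 :: "'x set"
    and T :: "'a list set" and lab :: "'a list \<Rightarrow> 'x set \<times> nat" and acc :: "'a list \<Rightarrow> 'a list option"
  assumes KM: "KM_tree step le I0 T lab acc"
begin

abbreviation pre :: "'a list \<Rightarrow> 'x set \<times> nat"
  where "pre c \<equiv> km_pre step le I0 lab c"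

definition repeats_ancestor :: "'a list \<Rightarrow> bool"
  where "repeats_ancestor c \<longleftrightarrow> (\<exists>c'. strict_prefix c' c \<and> fst (lab c') = fst (pre c))"

lemma node_spec:
  assumes "c \<in> T"
  shows "if repeats_ancestor c
       then lab c = pre c \<and> acc c = None \<and> (\<forall>a. c @ [a] \<notin> T)
       else (if \<exists>c'. strict_prefix c' c \<and> fst (lab c') \<subset> fst (pre c) \<and> snd (lab c') = snd (pre c)
             then (\<exists>c'. strict_prefix c' c \<and> fst (lab c') \<subset> fst (pre c) \<and> snd (lab c') = snd (pre c) \<and>
                     acc c = Some c' \<and>
                     lab c = (winf step le (drop (length c') c) (fst (pre c)), Suc (snd (pre c))))
             else lab c = pre c \<and> acc c = None)
         \<and> (\<forall>a. c @ [a] \<in> T \<longleftrightarrow> succ step le a (fst (lab c)) \<noteq> None)"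
  using KM assms unfolding KM_tree_def Let_def repeats_ancestor_def by blast

lemma repeated_node:
  "c \<in> T \<Longrightarrow> repeats_ancestor c \<Longrightarrow> lab c = pre c \<and> acc c = None \<and> (\<forall>a. c @ [a] \<notin> T)"
  using node_spec by simp

lemma child_mem_iff:
  "c \<in> T \<Longrightarrow> \<not> repeats_ancestor c \<Longrightarrow> c @ [a] \<in> T \<longleftrightarrow> succ step le a (fst (lab c)) \<noteq> None"
  using node_spec by simp

lemma unrepeated_node:
  assumes "c \<in> T" "\<not> repeats_ancestor c"
  shows "lab c = pre c \<and> acc c = None \<or>
    (\<exists>c'. strict_prefix c' c \<and> fst (lab c') \<subset> fst (pre c) \<and> acc c = Some c' \<and>
       fst (lab c) = winf step le (drop (length c') c) (fst (pre c)))"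
  using node_spec[OF assms(1)] assms(2) by (auto split: if_splits)

lemma mem_if_prefix: "c \<in> T \<Longrightarrow> prefix c' c \<Longrightarrow> c' \<in> T"
proof (induction c rule: rev_induct)
  case (snoc a c)
  then show ?case
    using KM unfolding KM_tree_def by (metis prefix_snoc)
qed simp

lemma not_repeats_ancestor_if_strict_prefix:
  assumes "d \<in> T" "strict_prefix c d"
  shows "\<not> repeats_ancestor c"
proof -
  obtain a where "prefix (c @ [a]) d"
    using assms(2) by (auto elim: strict_prefixE')
  then have "c @ [a] \<in> T" "c \<in> T"
    using mem_if_prefix[OF assms(1)] prefix_order.trans[of c "c @ [a]" d] by auto
  then show ?thesis
    using repeated_node by blast
qed

lemma fst_pre_snoc: "fst (pre (c @ [a])) = the (succ step le a (fst (lab c)))"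
  unfolding km_pre_def by simp

lemma fst_label_root: "fst (lab []) = I0"
  using node_spec[of "[]"] KM unfolding KM_tree_def km_pre_def repeats_ancestor_def by auto

lemma label_cases:
  assumes "c \<in> T"
  shows "fst (lab c) = fst (pre c) \<or> (\<exists>v. fst (lab c) = winf step le v (fst (pre c)))"
proof (cases "repeats_ancestor c")
  case True
  then show ?thesis using repeated_node[OF assms] by simp
next
  case False
  then show ?thesis using unrepeated_node[OF assms] by force
qed

lemma pre_subset_label: "c \<in> T \<Longrightarrow> fst (pre c) \<subseteq> fst (lab c)"
  using label_cases subset_winf by fastforce

lemma child_label_cases:
  assumes "c @ [a] \<in> T"
  obtains J where "cstep step le a (fst (lab c)) J"
    "fst (lab (c @ [a])) = J \<or> (\<exists>v. fst (lab (c @ [a])) = winf step le v J)"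
proof -
  have "strict_prefix c (c @ [a])"
    by (simp add: strict_prefix_def)
  then have "c \<in> T" "\<not> repeats_ancestor c"
    using assms mem_if_prefix not_repeats_ancestor_if_strict_prefix by auto
  then obtain J where J: "succ step le a (fst (lab c)) = Some J"
    using child_mem_iff assms by blast
  moreover have "fst (pre (c @ [a])) = J"
    using J by (simp add: fst_pre_snoc)
  ultimately show ?thesis
    using that[OF cstep_if_succ_eq_Some[OF J]] label_cases[OF assms] by simp
qed

lemma acc_label_subset:
  assumes "c \<in> T" "acc c = Some c'"
  shows "fst (lab c') \<subseteq> fst (lab c)"
proof -
  have "\<not> repeats_ancestor c"
    using assms repeated_node by fastforce
  then have "fst (lab c') \<subset> fst (pre c)"
    using assms unrepeated_node by fastforce
  then show ?thesis
    using pre_subset_label[OF assms(1)] by blast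
qed

lemma reach_epsA_mem: "reach T (epsA T lab) c w d \<Longrightarrow> d \<in> T"
  by (induction rule: reach.induct) (auto simp: epsA_def intro: mem_if_prefix)

lemma epsK_label_subset: "epsK T lab acc d d' \<Longrightarrow> fst (lab d') \<subseteq> fst (lab d)"
  unfolding epsK_def epsA_def using acc_label_subset by auto

lemma coverable_child_label:
  assumes "reflp le" "transp le" "strongly_monotone step le"
    and "d @ [a] \<in> T" "z \<in> fst (lab (d @ [a]))"
  shows "coverable step le (fst (lab d)) [a] z"
proof -
  obtain J where J: "cstep step le a (fst (lab d)) J"
    and lab: "fst (lab (d @ [a])) = J \<or> (\<exists>v. fst (lab (d @ [a])) = winf step le v J)"
    by (rule child_label_cases[OF assms(4)])
  have "coverable step le J [] z"
  proof (cases "fst (lab (d @ [a])) = J")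
    case True
    then show ?thesis
      using coverable_Nil_if_mem[OF assms(1)] assms(5) by simp
  next
    case False
    then obtain v where "z \<in> winf step le v J"
      using lab assms(5) by auto
    then show ?thesis
      by (rule coverable_if_winf[OF assms(1-3)])
  qed
  from coverable_append[OF assms(3,2) coverable_if_cstep[OF J] this] show ?thesis
    by simp
qed

lemma coverable_if_reach_epsK:
  assumes "reflp le" "transp le" "strongly_monotone step le"
  shows "reach T (epsK T lab acc) c w d \<Longrightarrow> z \<in> fst (lab d) \<Longrightarrow> coverable step le (fst (lab c)) w z"
proof (induction arbitrary: z rule: reach.induct)
  case (refl c)
  show ?case by (rule coverable_Nil_if_mem[OF assms(1) refl.prems])
next
  case (arc c w d a)
  show ?case
    by (rule coverable_append[OF assms(3,2) arc.IH coverable_child_label[OF assms arc.hyps(2) arc.prems]])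
next
  case (eps c w d d')
  then show ?case
    using epsK_label_subset by blast
qed

context
  assumes V: "very_wsts step le" and I0: "I0 \<in> Idl le"
begin

lemma label_is_ideal: "c \<in> T \<Longrightarrow> is_ideal le (fst (lab c))"
proof (induction c rule: rev_induct)
  case Nil
  then show ?case using fst_label_root I0 unfolding Idl_def by simp
next
  case (snoc a c)
  obtain J where J: "cstep step le a (fst (lab c)) J"
    and "fst (lab (c @ [a])) = J \<or> (\<exists>v. fst (lab (c @ [a])) = winf step le v J)"
    by (rule child_label_cases[OF snoc.prems])
  moreover have "is_ideal le J"
    using J by (rule cstep_is_ideal)
  ultimately show ?case
    using winf_is_ideal[OF V] by metis
qed

lemma successor_in_child:
  assumes "e \<in> T" "\<not> repeats_ancestor e" "y \<in> fst (lab e)" "step a y y'"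
  shows "e @ [a] \<in> T" "y' \<in> fst (lab (e @ [a]))"
proof -
  have "y' \<in> Post step (fst (lab e)) a"
    using assms(3,4) unfolding Post_def by blast
  then have "\<exists>J. cstep step le a (fst (lab e)) J \<and> y' \<in> J"
    by (rule ex_cstep_mem[OF very_wsts_reflp[OF V] very_wsts_transp[OF V]])
  then obtain J where J: "cstep step le a (fst (lab e)) J" "y' \<in> J"
    by blast
  have succ: "succ step le a (fst (lab e)) = Some J"
    using V label_is_ideal[OF assms(1)] J(1) by (rule succ_eq_Some_if_cstep)
  then show child: "e @ [a] \<in> T"
    using child_mem_iff[OF assms(1,2)] by simp
  have "fst (pre (e @ [a])) = J"
    using succ by (simp add: fst_pre_snoc)
  then have "J \<subseteq> fst (lab (e @ [a]))"
    using pre_subset_label[OF child] by simp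
  then show "y' \<in> fst (lab (e @ [a]))"
    using J(2) by blast
qed

lemma reach_epsA_to_unrepeated:
  assumes reach: "reach T (epsA T lab) c w e"
  obtains e' where "reach T (epsA T lab) c w e'" "e' \<in> T" "\<not> repeats_ancestor e'"
    "fst (lab e') = fst (lab e)"
proof (cases "repeats_ancestor e")
  case False
  then show ?thesis
    using that reach reach_epsA_mem[OF reach] by blast
next
  case True
  have "e \<in> T"
    using reach by (rule reach_epsA_mem)
  obtain e' where e': "strict_prefix e' e" "fst (lab e') = fst (pre e)"
    using True unfolding repeats_ancestor_def by blast
  have "lab e = pre e" "\<forall>a. e @ [a] \<notin> T"
    using repeated_node[OF \<open>e \<in> T\<close> True] by auto
  then have "epsA T lab e e'"
    using \<open>e \<in> T\<close> e' unfolding epsA_def by simp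
  moreover have "e' \<in> T" "\<not> repeats_ancestor e'"
    using mem_if_prefix[OF \<open>e \<in> T\<close>] not_repeats_ancestor_if_strict_prefix[OF \<open>e \<in> T\<close>] e'(1)
    by auto
  ultimately show ?thesis
    using that[OF reach.eps[OF reach]] e'(2) \<open>lab e = pre e\<close> by simp
qed

lemma reach_epsA_snoc:
  assumes reach: "reach T (epsA T lab) c w e" and "y \<in> fst (lab e)" "step a y y'"
  shows "\<exists>d. reach T (epsA T lab) c (w @ [a]) d \<and> y' \<in> fst (lab d)"
proof -
  obtain e' where e': "reach T (epsA T lab) c w e'" "e' \<in> T" "\<not> repeats_ancestor e'"
    "fst (lab e') = fst (lab e)"
    using reach by (rule reach_epsA_to_unrepeated)
  then have "e' @ [a] \<in> T" "y' \<in> fst (lab (e' @ [a]))"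
    using successor_in_child assms(2,3) by simp_all
  then show ?thesis
    using reach.arc[OF e'(1)] by blast
qed

lemma reach_epsA_if_steps:
  "steps step w y z \<Longrightarrow> c \<in> T \<Longrightarrow> y \<in> fst (lab c) \<Longrightarrow> \<exists>d. reach T (epsA T lab) c w d \<and> z \<in> fst (lab d)"
proof (induction w arbitrary: z rule: rev_induct)
  case Nil
  then show ?case using reach.refl by fastforce
next
  case (snoc a w)
  then obtain x where "steps step w y x" "step a x z"
    using steps_append[of step w "[a]"] by auto
  with snoc obtain e where "reach T (epsA T lab) c w e" "x \<in> fst (lab e)"
    by blast
  then show ?case
    using reach_epsA_snoc \<open>step a x z\<close> by blast
qed

end

end

theorem proposition11:
  fixes step :: "'a::finite \<Rightarrow> 'x \<Rightarrow> 'x \<Rightarrow> bool"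
    and le :: "'x \<Rightarrow> 'x \<Rightarrow> bool"
    and I0 :: "'x set"
    and T :: "'a list set"
    and lab :: "'a list \<Rightarrow> 'x set \<times> nat"
    and acc :: "'a list \<Rightarrow> 'a list option"
  assumes "very_wsts step le"
    and "I0 \<in> Idl le"
    and "KM_tree step le I0 T lab acc"
  shows "(\<forall>y z w c. steps step w y z \<and> c \<in> T \<and> y \<in> fst (lab c) \<longrightarrow>
            (\<exists>d. reach T (epsA T lab) c w d \<and> z \<in> fst (lab d)))
       \<and> (\<forall>z w c d. c \<in> T \<and> reach T (epsK T lab acc) c w d \<and> z \<in> fst (lab d) \<longrightarrow>
            (\<exists>y\<in>fst (lab c). \<exists>w' z'. subseq w w' \<and> le z z' \<and> steps step w' y z'))"
proof -
  interpret km_tree step le I0 T lab acc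
    using assms(3) by (rule km_tree.intro)
  have "reflp le" "transp le" "strongly_monotone step le"
    using assms(1) by (rule very_wsts_reflp very_wsts_transp very_wsts_strongly_monotone)+
  then show ?thesis
    using reach_epsA_if_steps[OF assms(1,2)] coverable_if_reach_epsK unfolding coverable_def by blast
qed

end
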